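(* Let $\mathbb{X},\mathbb{Y}$ be real Banach spaces of dimension greater than $1$ and let $T\in\mathbb{L}(\mathbb{X},\mathbb{Y})$ be nonzero. Let $0<\delta,\delta_1,\delta_2<\|T\|$. Then: (i) $M_T(\delta)$ is nonempty. (ii) If $\delta_1<\delta_2$ then $M_T(\delta_1)\subseteq M_T(\delta_2)$. Moreover, if $T$ is not a scalar multiple of an isometry, then there exist $0<\delta_1<\delta_2<\|T\|$ such that $M_T(\delta_1)\subsetneq M_T(\delta_2)$. (iii) $M_T=\bigcap_{0<\delta<\|T\|}M_T(\delta)$. (iv) If $\mathbb{X}$ is finite-dimensional, then $T$ is injective if and only if $M_T(\delta)=S_{\mathbb{X}}$ for some $0<\delta<\|T\|$. This equivalence is not necessarily true if $\mathbb{X}$ is infinite-dimensional: there exist an infinite-dimensional Banach space $\mathbb{X}$ and an injective nonzero $T\in\mathbb{L}(\mathbb{X},\mathbb{X})$ such that $M_T(\delta)\neq S_{\mathbb{X}}$ for every $0<\delta<\|T\|$.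
   Context: $\mathbb{L}(\mathbb{X},\mathbb{Y})$ is the space of bounded linear operators with the operator norm; $S_{\mathbb{X}}$ is the unit sphere of $\mathbb{X}$. For $T\in\mathbb{L}(\mathbb{X},\mathbb{Y})$, the norm attainment set is $M_T=\{x\in S_{\mathbb{X}}:\|Tx\|=\|T\|\}$. For nonzero $T$ and $0<\delta<\|T\|$, the $\delta$-approximate norm attainment set is $M_T(\delta)=\{x\in S_{\mathbb{X}}:\|Tx\|>\|T\|-\delta\}$. *)

theory Defs
  imports "HOL-Analysis.Analysis"
begin

definition norm_att_set :: "('a::real_normed_vector \<Rightarrow>\<^sub>L 'b::real_normed_vector) \<Rightarrow> 'a set" where
  "norm_att_set T = {x \<in> sphere 0 1. norm (blinfun_apply T x) = norm T}"

definition approx_norm_att_set ::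
  "('a::real_normed_vector \<Rightarrow>\<^sub>L 'b::real_normed_vector) \<Rightarrow> real \<Rightarrow> 'a set" where
  "approx_norm_att_set T \<delta> = {x \<in> sphere 0 1. norm (blinfun_apply T x) > norm T - \<delta>}"

definition dim_gt_one :: "'a::real_vector itself \<Rightarrow> bool" where
  "dim_gt_one _ \<longleftrightarrow> (\<exists>B::'a set. independent B \<and> card B = 2)"

definition fin_dim :: "'a::real_vector itself \<Rightarrow> bool" where
  "fin_dim _ \<longleftrightarrow> (\<exists>B::'a set. finite B \<and> span B = UNIV)"

definition is_isometry :: "('a::real_normed_vector \<Rightarrow>\<^sub>L 'b::real_normed_vector) \<Rightarrow> bool" where
  "is_isometry U \<longleftrightarrow> (\<forall>x. norm (blinfun_apply U x) = norm x)"

definition scalar_mult_isometry :: "('a::real_normed_vector \<Rightarrow>\<^sub>L 'b::real_normed_vector) \<Rightarrow> bool" where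
  "scalar_mult_isometry T \<longleftrightarrow> (\<exists>c U. is_isometry U \<and> T = c *\<^sub>R U)"

end

theory Submission
  imports Defs
begin

text \<open>Since \<open>norm T\<close> is the supremum of \<open>norm (T x)\<close> over the unit sphere, the sets
\<open>M_T(\<delta>)\<close> are nonempty, increase with \<delta>, and intersect to \<open>M_T\<close>. If \<open>T\<close> is not a
multiple of an isometry, some unit vector \<open>x\<close> has \<open>0 < norm (T x) < norm T\<close>: either directly,
or \<open>T\<close> kills a unit vector \<open>x\<^sub>0\<close> and \<open>x\<^sub>0 + y/4\<close>, normalised, works for any unit \<open>y\<close>
with \<open>T y \<noteq> 0\<close>. Such an \<open>x\<close> lies in \<open>M_T(\<delta>)\<close> exactly for \<open>\<delta> > norm T - norm (T x)\<close>.
In finite dimension an injective \<open>T\<close> is bounded below on the unit sphere, by compactness of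
the set of vectors whose coordinates in a basis have \<open>\<ell>\<^sup>1\<close>-norm one. On \<open>\<ell>\<^sup>\<infinity>\<close>, here the
bounded functions on \<open>nat\<close>, the diagonal operator with entries \<open>1/(n+1)\<close> is injective, but
its values on the unit sequences tend to zero.\<close>

lemma norm_blinfun_ratio_scaleR:
  fixes T :: "'a::real_normed_vector \<Rightarrow>\<^sub>L 'b::real_normed_vector"
  assumes "r \<noteq> 0"
  shows "norm (T (r *\<^sub>R x)) / norm (r *\<^sub>R x) = norm (T x) / norm x"
  using assms by (simp add: blinfun.scaleR_right)

lemma norm_blinfun_normalize:
  fixes T :: "'a::real_normed_vector \<Rightarrow>\<^sub>L 'b::real_normed_vector"
  assumes "x \<noteq> 0"
  shows "norm (T (x /\<^sub>R norm x)) = norm (T x) / norm x"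
  using norm_blinfun_ratio_scaleR[of "inverse (norm x)" T x] assms by simp

lemma norm_blinfun_le_on_sphere:
  fixes T :: "'a::real_normed_vector \<Rightarrow>\<^sub>L 'b::real_normed_vector"
  assumes "0 \<le> b" and "\<And>x. x \<in> sphere 0 1 \<Longrightarrow> norm (T x) \<le> b"
  shows "norm T \<le> b"
proof (rule norm_blinfun_bound[OF \<open>0 \<le> b\<close>])
  fix x :: 'a
  show "norm (T x) \<le> b * norm x"
  proof (cases "x = 0")
    case False
    then have "norm (T x) / norm x \<le> b"
      using assms(2)[of "x /\<^sub>R norm x"] by (simp add: norm_blinfun_normalize)
    with False show ?thesis by (simp add: divide_le_eq mult.commute)
  qed simp
qed

lemma approx_norm_att_set_nonempty:
  fixes T :: "'a::real_normed_vector \<Rightarrow>\<^sub>L 'b::real_normed_vector"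
  assumes "0 < \<delta>" and "\<delta> \<le> norm T"
  shows "approx_norm_att_set T \<delta> \<noteq> {}"
proof
  assume "approx_norm_att_set T \<delta> = {}"
  then have "norm T \<le> norm T - \<delta>"
    using assms by (intro norm_blinfun_le_on_sphere) (auto simp: approx_norm_att_set_def)
  with \<open>0 < \<delta>\<close> show False by simp
qed

lemma approx_norm_att_set_mono:
  "\<delta>\<^sub>1 \<le> \<delta>\<^sub>2 \<Longrightarrow> approx_norm_att_set T \<delta>\<^sub>1 \<subseteq> approx_norm_att_set T \<delta>\<^sub>2"
  unfolding approx_norm_att_set_def by auto

lemma norm_att_set_eq_Inter_approx_norm_att_set:
  fixes T :: "'a::real_normed_vector \<Rightarrow>\<^sub>L 'b::real_normed_vector"
  assumes "T \<noteq> 0"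
  shows "norm_att_set T = (\<Inter>\<delta>\<in>{0<..<norm T}. approx_norm_att_set T \<delta>)"
proof (intro equalityI subsetI)
  fix x assume "x \<in> norm_att_set T"
  then show "x \<in> (\<Inter>\<delta>\<in>{0<..<norm T}. approx_norm_att_set T \<delta>)"
    by (auto simp: norm_att_set_def approx_norm_att_set_def)
next
  fix x assume x: "x \<in> (\<Inter>\<delta>\<in>{0<..<norm T}. approx_norm_att_set T \<delta>)"
  have "norm T / 2 \<in> {0<..<norm T}" using assms by simp
  with x have "x \<in> approx_norm_att_set T (norm T / 2)" by blast
  then have unit: "x \<in> sphere 0 1" by (simp add: approx_norm_att_set_def)
  then have le: "norm (T x) \<le> norm T" using norm_blinfun[of T x] by simp
  have "\<not> norm (T x) < norm T"
  proof
    assume lt: "norm (T x) < norm T"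
    then have "(norm T - norm (T x)) / 2 \<in> {0<..<norm T}"
      using norm_ge_zero[of "T x"] by (simp only: greaterThanLessThan_iff field_simps) linarith
    with x have "norm T - (norm T - norm (T x)) / 2 < norm (T x)"
      by (auto simp: approx_norm_att_set_def)
    with lt show False by (simp add: field_simps)
  qed
  with le unit show "x \<in> norm_att_set T" by (simp add: norm_att_set_def)
qed

lemma constant_norm_on_sphere_imp_scalar_mult_isometry:
  fixes T :: "'a::real_normed_vector \<Rightarrow>\<^sub>L 'b::real_normed_vector"
  assumes "T \<noteq> 0" and const: "\<And>x. x \<in> sphere 0 1 \<Longrightarrow> norm (T x) = norm T"
  shows "scalar_mult_isometry T"
proof -
  have "is_isometry (inverse (norm T) *\<^sub>R T)"
    unfolding is_isometry_def
  proof
    fix x :: 'a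
    have "norm (T x) = norm T * norm x"
    proof (cases "x = 0")
      case False
      then show ?thesis
        using const[of "x /\<^sub>R norm x"] by (simp add: norm_blinfun_normalize divide_eq_eq)
    qed simp
    with \<open>T \<noteq> 0\<close> show "norm ((inverse (norm T) *\<^sub>R T) x) = norm x"
      by (simp add: scaleR_blinfun.rep_eq)
  qed
  moreover have "T = norm T *\<^sub>R (inverse (norm T) *\<^sub>R T)" using \<open>T \<noteq> 0\<close> by simp
  ultimately show ?thesis unfolding scalar_mult_isometry_def by blast
qed

lemma kernel_meets_sphere_imp_intermediate_norm:
  fixes T :: "'a::real_normed_vector \<Rightarrow>\<^sub>L 'b::real_normed_vector"
  assumes "T \<noteq> 0" and x\<^sub>0: "x\<^sub>0 \<in> sphere 0 1" "T x\<^sub>0 = 0"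
  obtains x where "x \<in> sphere 0 1" and "0 < norm (T x)" and "norm (T x) < norm T"
proof -
  obtain y where y: "y \<in> sphere 0 1" "T y \<noteq> 0"
    using approx_norm_att_set_nonempty[of "norm T" T] assms(1)
    by (auto simp: approx_norm_att_set_def)
  define z where "z = x\<^sub>0 + (1/4) *\<^sub>R y"
  have Tz: "T z = (1/4) *\<^sub>R T y"
    using x\<^sub>0 by (simp add: z_def blinfun.add_right blinfun.scaleR_right)
  have "norm x\<^sub>0 \<le> norm z + norm ((1/4) *\<^sub>R y)"
    using norm_triangle_ineq4[of z "(1/4) *\<^sub>R y"] by (simp add: z_def)
  with x\<^sub>0 y have z: "3/4 \<le> norm z" by simp
  then have "z \<noteq> 0" by auto
  have "norm (T z) / norm z \<le> (norm T / 4) / (3/4)"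
    using z norm_blinfun[of T y] y(1) by (intro frac_le) (auto simp: Tz)
  also have "\<dots> < norm T" using \<open>T \<noteq> 0\<close> by simp
  finally have "norm (T z) / norm z < norm T" .
  moreover have "0 < norm (T z) / norm z" using z y(2) \<open>z \<noteq> 0\<close> by (simp add: Tz zero_less_divide_iff)
  ultimately show ?thesis
    using that[of "z /\<^sub>R norm z"] \<open>z \<noteq> 0\<close> by (simp add: norm_blinfun_normalize)
qed

lemma not_scalar_mult_isometry_imp_intermediate_norm:
  fixes T :: "'a::real_normed_vector \<Rightarrow>\<^sub>L 'b::real_normed_vector"
  assumes "T \<noteq> 0" and "\<not> scalar_mult_isometry T"
  obtains x where "x \<in> sphere 0 1" and "0 < norm (T x)" and "norm (T x) < norm T"
proof (cases "\<exists>x\<^sub>0\<in>sphere 0 1. T x\<^sub>0 = 0")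
  case True
  then show ?thesis using kernel_meets_sphere_imp_intermediate_norm[OF \<open>T \<noteq> 0\<close>] that by blast
next
  case False
  obtain x where "x \<in> sphere 0 1" "norm (T x) \<noteq> norm T"
    using constant_norm_on_sphere_imp_scalar_mult_isometry assms by blast
  moreover have "norm (T x) \<le> norm T" using norm_blinfun[of T x] \<open>x \<in> sphere 0 1\<close> by simp
  ultimately show ?thesis using False that by force
qed

lemma ex_approx_norm_att_set_psubset:
  fixes T :: "'a::real_normed_vector \<Rightarrow>\<^sub>L 'b::real_normed_vector"
  assumes "T \<noteq> 0" and "\<not> scalar_mult_isometry T"
  shows "\<exists>\<delta>\<^sub>1 \<delta>\<^sub>2. 0 < \<delta>\<^sub>1 \<and> \<delta>\<^sub>1 < \<delta>\<^sub>2 \<and> \<delta>\<^sub>2 < norm T \<and>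
           approx_norm_att_set T \<delta>\<^sub>1 \<subset> approx_norm_att_set T \<delta>\<^sub>2"
proof -
  obtain x where x: "x \<in> sphere 0 1" "0 < norm (T x)" "norm (T x) < norm T"
    using not_scalar_mult_isometry_imp_intermediate_norm assms by blast
  define a where "a = norm T - norm (T x)"
  have "x \<in> approx_norm_att_set T ((a + norm T) / 2)"
    using x by (simp add: approx_norm_att_set_def a_def field_simps)
  moreover have "x \<notin> approx_norm_att_set T (a / 2)"
    using x by (simp add: approx_norm_att_set_def a_def field_simps)
  moreover have "approx_norm_att_set T (a / 2) \<subseteq> approx_norm_att_set T ((a + norm T) / 2)"
    using x by (intro approx_norm_att_set_mono) (simp add: a_def)
  ultimately show ?thesis
    using x by (intro exI[of _ "a / 2"] exI[of _ "(a + norm T) / 2"]) (auto simp: a_def)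
qed

lemma fin_dim_obtains_finite_basis:
  assumes "fin_dim TYPE('a)"
  obtains B :: "'a::real_vector set" where "finite B" and "independent B" and "span B = UNIV"
proof -
  obtain B\<^sub>0 :: "'a set" where B\<^sub>0: "finite B\<^sub>0" "span B\<^sub>0 = UNIV"
    using assms unfolding fin_dim_def by blast
  obtain B where B: "B \<subseteq> B\<^sub>0" "independent B" "B\<^sub>0 \<subseteq> span B"
    using maximal_independent_subset[of B\<^sub>0] by blast
  have "span B = UNIV"
    using B\<^sub>0(2) span_mono[OF B(3)] by (simp add: span_span top_le)
  with B B\<^sub>0 show ?thesis using that finite_subset by blast
qed

lemma compact_unit_l1_coefficients:
  assumes "finite B"
  shows "compact {c :: 'i \<Rightarrow> real. (\<forall>i. i \<notin> B \<longrightarrow> c i = 0) \<and> (\<Sum>i\<in>B. \<bar>c i\<bar>) = 1}"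
proof -
  define cube :: "('i \<Rightarrow> real) set"
    where "cube = PiE UNIV (\<lambda>i. if i \<in> B then {-1..1} else {0})"
  have "compactin (product_topology (\<lambda>i. euclidean) UNIV) cube"
    unfolding cube_def compactin_PiE by auto
  then have "compact cube" by (simp add: euclidean_product_topology)
  moreover have "closed {c :: 'i \<Rightarrow> real. (\<Sum>i\<in>B. \<bar>c i\<bar>) = 1}"
    by (intro closed_Collect_eq continuous_intros continuous_on_product_coordinates)
  moreover have "{c. (\<forall>i. i \<notin> B \<longrightarrow> c i = 0) \<and> (\<Sum>i\<in>B. \<bar>c i\<bar>) = 1}
      = cube \<inter> {c. (\<Sum>i\<in>B. \<bar>c i\<bar>) = 1}"
  proof safe
    fix c :: "'i \<Rightarrow> real"
    assume "(\<Sum>i\<in>B. \<bar>c i\<bar>) = 1" "\<forall>i. i \<notin> B \<longrightarrow> c i = 0"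
    moreover have "\<bar>c i\<bar> \<le> (\<Sum>i\<in>B. \<bar>c i\<bar>)" if "i \<in> B" for i
      using member_le_sum[of i B "\<lambda>i. \<bar>c i\<bar>"] that assms by simp
    ultimately show "c \<in> cube" by (auto simp: cube_def abs_le_iff)
  next
    fix c :: "'i \<Rightarrow> real" and i
    assume "c \<in> cube" "i \<notin> B"
    then have "c i \<in> (if i \<in> B then {-1..1} else {0})"
      unfolding cube_def by (intro PiE_mem[of c UNIV]) simp_all
    with \<open>i \<notin> B\<close> show "c i = 0" by simp
  qed
  ultimately show ?thesis using compact_Int_closed by metis
qed

lemma fin_dim_obtains_compact_ray_section:
  assumes "fin_dim TYPE('a)"
  obtains C :: "'a::real_normed_vector set"
  where "compact C" and "0 \<notin> C" and "\<And>x. x \<noteq> 0 \<Longrightarrow> \<exists>r>0. r *\<^sub>R x \<in> C"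
proof -
  obtain B :: "'a set" where B: "finite B" "independent B" "span B = UNIV"
    using fin_dim_obtains_finite_basis[OF assms] by blast
  define K where "K = {c :: 'a \<Rightarrow> real. (\<forall>i. i \<notin> B \<longrightarrow> c i = 0) \<and> (\<Sum>i\<in>B. \<bar>c i\<bar>) = 1}"
  define L where "L c = (\<Sum>i\<in>B. c i *\<^sub>R i)" for c :: "'a \<Rightarrow> real"
  have "continuous_on UNIV L"
    unfolding L_def by (intro continuous_intros continuous_on_product_coordinates)
  then have "continuous_on K L" by (rule continuous_on_subset) simp
  then have "compact (L ` K)"
    using compact_unit_l1_coefficients[OF B(1)] by (simp add: K_def compact_continuous_image)
  moreover have "0 \<notin> L ` K"
  proof
    assume "0 \<in> L ` K"
    then obtain c where c: "c \<in> K" "(\<Sum>i\<in>B. c i *\<^sub>R i) = 0" by (auto simp: L_def)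
    then have "\<forall>i\<in>B. c i = 0"
      using B(1,2) by (auto simp: real_vector.independent_explicit_module)
    with c(1) show False by (simp add: K_def)
  qed
  moreover have "\<exists>r>0. r *\<^sub>R x \<in> L ` K" if "x \<noteq> 0" for x
  proof -
    obtain u where u: "x = (\<Sum>i\<in>B. u i *\<^sub>R i)"
      using span_finite[OF B(1)] B(3) by auto
    define s where "s = (\<Sum>i\<in>B. \<bar>u i\<bar>)"
    have "s \<noteq> 0"
    proof
      assume "s = 0"
      then have "\<forall>i\<in>B. u i = 0" using B(1) by (simp add: s_def sum_nonneg_eq_0_iff)
      with u \<open>x \<noteq> 0\<close> show False by simp
    qed
    then have "s > 0" by (simp add: s_def order_le_neq_trans sum_nonneg)
    define c where "c i = (if i \<in> B then u i / s else 0)" for i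
    have "c \<in> K"
      using \<open>s > 0\<close> by (simp add: K_def c_def s_def abs_divide sum_divide_distrib[symmetric])
    moreover have "L c = (1 / s) *\<^sub>R x"
      unfolding L_def u c_def scaleR_sum_right by (intro sum.cong) auto
    ultimately have "(1 / s) *\<^sub>R x \<in> L ` K" by (metis image_eqI)
    with \<open>s > 0\<close> show ?thesis by (intro exI[of _ "1 / s"]) simp
  qed
  ultimately show ?thesis by (rule that)
qed

lemma fin_dim_inj_blinfun_bounded_below_on_sphere:
  fixes T :: "'a::real_normed_vector \<Rightarrow>\<^sub>L 'b::real_normed_vector"
  assumes "fin_dim TYPE('a)" and "inj T"
  obtains m where "0 < m" and "\<And>x. x \<in> sphere 0 1 \<Longrightarrow> m \<le> norm (T x)"
proof -
  obtain C :: "'a set" where C: "compact C" "0 \<notin> C" "\<And>x. x \<noteq> 0 \<Longrightarrow> \<exists>r>0. r *\<^sub>R x \<in> C"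
    using fin_dim_obtains_compact_ray_section[OF assms(1)] by blast
  define g where "g x = norm (T x) / norm x" for x
  have g_ray: "\<exists>y\<in>C. g y = norm (T x)" if x: "x \<in> sphere 0 1" for x
  proof -
    have "x \<noteq> 0" using x by auto
    then obtain r where "r > 0" "r *\<^sub>R x \<in> C" using C(3) by blast
    moreover have "g (r *\<^sub>R x) = g x"
      using \<open>r > 0\<close> unfolding g_def by (intro norm_blinfun_ratio_scaleR) simp
    moreover have "g x = norm (T x)" using x by (simp add: g_def)
    ultimately show ?thesis by metis
  qed
  show ?thesis
  proof (cases "C = {}")
    case True
    then show ?thesis using g_ray that[of 1] by auto
  next
    case False
    have "continuous_on C g"
      unfolding g_def using C(2) by (intro continuous_intros) auto
    then obtain x\<^sub>0 where x\<^sub>0: "x\<^sub>0 \<in> C" "\<And>y. y \<in> C \<Longrightarrow> g x\<^sub>0 \<le> g y"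
      using continuous_attains_inf[OF C(1) False] by blast
    have "x\<^sub>0 \<noteq> 0" using C(2) x\<^sub>0(1) by auto
    then have "T x\<^sub>0 \<noteq> 0" using \<open>inj T\<close> by (metis blinfun.zero_right injD)
    with \<open>x\<^sub>0 \<noteq> 0\<close> have "0 < g x\<^sub>0" by (simp add: g_def)
    moreover have "g x\<^sub>0 \<le> norm (T x)" if "x \<in> sphere 0 1" for x
      using g_ray[OF that] x\<^sub>0(2) by metis
    ultimately show ?thesis by (rule that)
  qed
qed

lemma approx_norm_att_set_eq_sphere_imp_inj:
  fixes T :: "'a::real_normed_vector \<Rightarrow>\<^sub>L 'b::real_normed_vector"
  assumes "\<delta> < norm T" and "approx_norm_att_set T \<delta> = sphere 0 1"
  shows "inj T"
  unfolding linear_injective_0[OF bounded_linear.linear[OF blinfun.bounded_linear_right]]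
proof (intro allI impI)
  fix x assume "T x = 0"
  show "x = 0"
  proof (rule ccontr)
    assume "x \<noteq> 0"
    then have "x /\<^sub>R norm x \<in> approx_norm_att_set T \<delta>" using assms(2) by simp
    then have "norm T - \<delta> < norm (T x) / norm x"
      using \<open>x \<noteq> 0\<close> by (simp add: approx_norm_att_set_def norm_blinfun_normalize)
    with \<open>T x = 0\<close> assms(1) show False by simp
  qed
qed

lemma fin_dim_inj_iff_approx_norm_att_set_eq_sphere:
  fixes T :: "'a::real_normed_vector \<Rightarrow>\<^sub>L 'b::real_normed_vector"
  assumes "fin_dim TYPE('a)" and "T \<noteq> 0"
  shows "inj T \<longleftrightarrow> (\<exists>\<delta>. 0 < \<delta> \<and> \<delta> < norm T \<and> approx_norm_att_set T \<delta> = sphere 0 1)"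
proof
  assume "inj T"
  then obtain m where m: "0 < m" "\<And>x. x \<in> sphere 0 1 \<Longrightarrow> m \<le> norm (T x)"
    using fin_dim_inj_blinfun_bounded_below_on_sphere[OF assms(1)] by blast
  obtain x where "x \<in> approx_norm_att_set T (norm T)"
    using approx_norm_att_set_nonempty[of "norm T" T] assms(2) by auto
  then have x: "x \<in> sphere 0 1" by (simp add: approx_norm_att_set_def)
  have "m \<le> norm T" using m(2)[OF x] norm_blinfun[of T x] x by simp
  have "norm T - (norm T - m / 2) < norm (T x)" if "x \<in> sphere 0 1" for x
    using m(1) m(2)[OF that] by simp
  then have "approx_norm_att_set T (norm T - m / 2) = sphere 0 1"
    by (auto simp: approx_norm_att_set_def)
  with m(1) \<open>m \<le> norm T\<close> show "\<exists>\<delta>. 0 < \<delta> \<and> \<delta> < norm T \<and> approx_norm_att_set T \<delta> = sphere 0 1"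
    by (intro exI[of _ "norm T - m / 2"]) simp
next
  assume "\<exists>\<delta>. 0 < \<delta> \<and> \<delta> < norm T \<and> approx_norm_att_set T \<delta> = sphere 0 1"
  then show "inj T" using approx_norm_att_set_eq_sphere_imp_inj by blast
qed

context includes bcontfun.lifting
begin

lift_definition unit_seq :: "nat \<Rightarrow> (nat \<Rightarrow>\<^sub>C real)" is "\<lambda>N n. if n = N then 1 else 0"
  by (rule bcontfun_normI[where b = 1]) auto

lift_definition div_succ :: "(nat \<Rightarrow>\<^sub>C real) \<Rightarrow> (nat \<Rightarrow>\<^sub>C real)"
  is "\<lambda>f n. f n / (real n + 1)"
proof -
  fix f :: "nat \<Rightarrow> real" assume "f \<in> bcontfun"
  then have "bounded (range f)" by (simp add: bcontfun_def)
  then obtain b where "\<And>n. \<bar>f n\<bar> \<le> b" by (auto simp: bounded_real)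
  show "(\<lambda>n. f n / (real n + 1)) \<in> bcontfun"
  proof (rule bcontfun_normI[where b = b])
    fix n :: nat
    have "\<bar>f n\<bar> / (real n + 1) \<le> \<bar>f n\<bar>" by (simp add: divide_le_eq mult_le_cancel_left1)
    with \<open>\<bar>f n\<bar> \<le> b\<close> show "norm (f n / (real n + 1)) \<le> b" by (simp add: abs_divide)
  qed simp
qed

end

lemma norm_unit_seq: "norm (unit_seq N) = 1"
proof (rule antisym)
  show "norm (unit_seq N) \<le> 1" by (rule norm_bound) (simp add: unit_seq.rep_eq)
  show "1 \<le> norm (unit_seq N)" using norm_bounded[of "unit_seq N" N] by (simp add: unit_seq.rep_eq)
qed

lemma inj_unit_seq: "inj unit_seq"
  by (rule injI) (metis unit_seq.rep_eq zero_neq_one)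

lemma independent_range_unit_seq: "independent (range unit_seq)"
  unfolding real_vector.independent_explicit_module
proof (intro allI impI)
  fix t u v
  assume t: "finite t" "t \<subseteq> range unit_seq" and sum0: "(\<Sum>w\<in>t. u w *\<^sub>R w) = 0" and "v \<in> t"
  then obtain N where N: "v = unit_seq N" by auto
  have "linear (\<lambda>f :: nat \<Rightarrow>\<^sub>C real. apply_bcontfun f N)" by (simp add: linear_iff)
  from linear_sum[OF this, of "\<lambda>w. u w *\<^sub>R w" t]
  have "0 = (\<Sum>w\<in>t. u w * apply_bcontfun w N)" by (simp add: sum0)
  also have "\<dots> = (\<Sum>w\<in>t. if w = v then u w else 0)"
  proof (rule sum.cong)
    fix w assume "w \<in> t"
    with t obtain M where "w = unit_seq M" by auto
    with N show "u w * apply_bcontfun w N = (if w = v then u w else 0)"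
      by (auto simp: unit_seq.rep_eq dest: injD[OF inj_unit_seq])
  qed simp
  also have "\<dots> = u v" using t(1) \<open>v \<in> t\<close> by simp
  finally show "u v = 0" by simp
qed

lemma not_fin_dim_bcontfun_nat: "\<not> fin_dim TYPE(nat \<Rightarrow>\<^sub>C real)"
proof
  assume "fin_dim TYPE(nat \<Rightarrow>\<^sub>C real)"
  then obtain B :: "(nat \<Rightarrow>\<^sub>C real) set" where "finite B" "span B = UNIV"
    unfolding fin_dim_def by blast
  then have "finite (range unit_seq)"
    using independent_span_bound[OF _ independent_range_unit_seq] by blast
  with inj_unit_seq show False by (simp add: finite_image_iff)
qed

lemma bounded_linear_div_succ: "bounded_linear div_succ"
proof (rule bounded_linear_intro[where K = 1])
  fix f g show "div_succ (f + g) = div_succ f + div_succ g"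
    by (rule bcontfun_eqI) (simp add: div_succ.rep_eq add_divide_distrib)
next
  fix r f show "div_succ (r *\<^sub>R f) = r *\<^sub>R div_succ f"
    by (rule bcontfun_eqI) (simp add: div_succ.rep_eq)
next
  fix f
  have "norm (apply_bcontfun (div_succ f) n) \<le> norm f" for n
  proof -
    have "norm (apply_bcontfun (div_succ f) n) \<le> \<bar>apply_bcontfun f n\<bar>"
      by (simp add: div_succ.rep_eq abs_divide divide_le_eq mult_le_cancel_left1)
    also have "\<dots> \<le> norm f" using norm_bounded[of f n] by simp
    finally show ?thesis .
  qed
  then show "norm (div_succ f) \<le> norm f * 1" by (simp add: norm_bound)
qed

lemma ex_inj_operator_approx_norm_att_set_ne_sphere:
  "\<exists>S :: (nat \<Rightarrow>\<^sub>C real) \<Rightarrow>\<^sub>L (nat \<Rightarrow>\<^sub>C real). S \<noteq> 0 \<and> inj (blinfun_apply S) \<and>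
     (\<forall>\<delta>. 0 < \<delta> \<and> \<delta> < norm S \<longrightarrow> approx_norm_att_set S \<delta> \<noteq> sphere 0 1)"
proof (intro exI conjI allI impI)
  define S where "S = Blinfun div_succ"
  have S: "blinfun_apply S = div_succ"
    unfolding S_def using bounded_linear_div_succ by (rule bounded_linear_Blinfun_apply)
  have S_unit_seq: "S (unit_seq N) = (1 / (real N + 1)) *\<^sub>R unit_seq N" for N
    by (rule bcontfun_eqI) (simp add: S div_succ.rep_eq unit_seq.rep_eq)
  have norm_S_unit_seq: "norm (S (unit_seq N)) = inverse (real (Suc N))" for N
    by (simp add: S_unit_seq norm_unit_seq inverse_eq_divide add.commute)
  from norm_S_unit_seq[of 0] have "S (unit_seq 0) \<noteq> 0" by auto
  then show "S \<noteq> 0" by auto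
  show "inj S" unfolding S
  proof (rule injI)
    fix f g assume "div_succ f = div_succ g"
    then have "apply_bcontfun (div_succ f) n = apply_bcontfun (div_succ g) n" for n by simp
    then show "f = g" by (intro bcontfun_eqI) (simp add: div_succ.rep_eq)
  qed
  fix \<delta> :: real assume "0 < \<delta> \<and> \<delta> < norm S"
  then obtain N where "inverse (real (Suc N)) < norm S - \<delta>"
    using reals_Archimedean[of "norm S - \<delta>"] by auto
  with norm_S_unit_seq[of N] have "unit_seq N \<notin> approx_norm_att_set S \<delta>"
    by (simp add: approx_norm_att_set_def)
  moreover have "unit_seq N \<in> sphere 0 1" by (simp add: norm_unit_seq)
  ultimately show "approx_norm_att_set S \<delta> \<noteq> sphere 0 1" by blast
qed

theorem proposition2p1:
  fixes T :: "'a::banach \<Rightarrow>\<^sub>L 'b::banach"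
  assumes "dim_gt_one TYPE('a)" and "dim_gt_one TYPE('b)" and "T \<noteq> 0"
  shows
    "(\<forall>\<delta>. 0 < \<delta> \<and> \<delta> < norm T \<longrightarrow> approx_norm_att_set T \<delta> \<noteq> {})
   \<and> (\<forall>\<delta>\<^sub>1 \<delta>\<^sub>2. 0 < \<delta>\<^sub>1 \<and> \<delta>\<^sub>1 < \<delta>\<^sub>2 \<and> \<delta>\<^sub>2 < norm T \<longrightarrow>
        approx_norm_att_set T \<delta>\<^sub>1 \<subseteq> approx_norm_att_set T \<delta>\<^sub>2)
   \<and> (\<not> scalar_mult_isometry T \<longrightarrow>
        (\<exists>\<delta>\<^sub>1 \<delta>\<^sub>2. 0 < \<delta>\<^sub>1 \<and> \<delta>\<^sub>1 < \<delta>\<^sub>2 \<and> \<delta>\<^sub>2 < norm T \<and>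
            approx_norm_att_set T \<delta>\<^sub>1 \<subset> approx_norm_att_set T \<delta>\<^sub>2))
   \<and> norm_att_set T = (\<Inter>\<delta>\<in>{0<..<norm T}. approx_norm_att_set T \<delta>)
   \<and> (fin_dim TYPE('a) \<longrightarrow>
        (inj (blinfun_apply T) \<longleftrightarrow>
          (\<exists>\<delta>. 0 < \<delta> \<and> \<delta> < norm T \<and> approx_norm_att_set T \<delta> = sphere 0 1)))
   \<and> (\<not> fin_dim TYPE(nat \<Rightarrow>\<^sub>C real) \<and>
      (\<exists>S :: (nat \<Rightarrow>\<^sub>C real) \<Rightarrow>\<^sub>L (nat \<Rightarrow>\<^sub>C real). S \<noteq> 0 \<and> inj (blinfun_apply S) \<and>
         (\<forall>\<delta>. 0 < \<delta> \<and> \<delta> < norm S \<longrightarrow> approx_norm_att_set S \<delta> \<noteq> sphere 0 1)))"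
proof -
  have "approx_norm_att_set T \<delta> \<noteq> {}" if "0 < \<delta>" and "\<delta> < norm T" for \<delta>
    using that by (simp add: approx_norm_att_set_nonempty)
  moreover have "approx_norm_att_set T \<delta>\<^sub>1 \<subseteq> approx_norm_att_set T \<delta>\<^sub>2" if "\<delta>\<^sub>1 < \<delta>\<^sub>2" for \<delta>\<^sub>1 \<delta>\<^sub>2
    using that by (simp add: approx_norm_att_set_mono)
  ultimately show ?thesis
    using ex_approx_norm_att_set_psubset[OF \<open>T \<noteq> 0\<close>]
      norm_att_set_eq_Inter_approx_norm_att_set[OF \<open>T \<noteq> 0\<close>]
      fin_dim_inj_iff_approx_norm_att_set_eq_sphere[OF _ \<open>T \<noteq> 0\<close>]
      not_fin_dim_bcontfun_nat ex_inj_operator_approx_norm_att_set_ne_sphere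
    by blast
qed

end
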